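(* Let $K$ be a field with $\mathrm{char}(K) = 0$ or $\mathrm{char}(K) > n$. Let $f \in K[x_1,\dots,x_n]$ be a homogeneous polynomial of degree $d$ all of whose terms are square-free. If $f(1,1,\dots,1) \neq 0$ in $K$, then for every $N \ge n+d$, in the polynomial ring $K[x_1,\dots,x_N]$ one has $$(S_N.f) = (S_N.\,x_1x_2\cdots x_d).$$ Conversely, if $f(1,1,\dots,1) = 0$ in $K$, then for every $N \ge n$ the radical $\sqrt{(S_N.f)}\subseteq K[x_1,\dots,x_N]$ contains no monomial.
   Context: $S_N$ acts on $K[x_1,\dots,x_N]$ by $\sigma.x_i = x_{\sigma(i)}$; $f$ is viewed as an element of $K[x_1,\dots,x_N]$ for $N\ge n$; $(S_N.f)$ is the ideal generated by the orbit of $f$, and $(S_N.\,x_1\cdots x_d)$ is the ideal generated by all square-free monomials of degree $d$ in $x_1,\dots,x_N$. *)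

theory Defs
  imports "HOL-Library.Poly_Mapping" "HOL-Combinatorics.Permutations"
begin

text \<open>Multivariate polynomials: finitely supported maps from monomials (exponent vectors
  nat =>0 nat) to coefficients. Variable x_(i+1) of the paper is index i here.\<close>
type_synonym 'a mpoly = "(nat \<Rightarrow>\<^sub>0 nat) \<Rightarrow>\<^sub>0 'a"

definition in_vars :: "nat \<Rightarrow> 'a::zero mpoly \<Rightarrow> bool" where
  "in_vars N p \<longleftrightarrow> (\<forall>\<alpha>\<in>Poly_Mapping.keys p. Poly_Mapping.keys \<alpha> \<subseteq> {..<N})"

definition rename_mono :: "(nat \<Rightarrow> nat) \<Rightarrow> (nat \<Rightarrow>\<^sub>0 nat) \<Rightarrow> (nat \<Rightarrow>\<^sub>0 nat)" where
  "rename_mono \<sigma> \<alpha> = (\<Sum>i\<in>Poly_Mapping.keys \<alpha>. Poly_Mapping.single (\<sigma> i) (Poly_Mapping.lookup \<alpha> i))"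

definition perm_act :: "(nat \<Rightarrow> nat) \<Rightarrow> 'a::comm_monoid_add mpoly \<Rightarrow> 'a mpoly" where
  "perm_act \<sigma> p = (\<Sum>\<alpha>\<in>Poly_Mapping.keys p.
      Poly_Mapping.single (rename_mono \<sigma> \<alpha>) (Poly_Mapping.lookup p \<alpha>))"

definition orbit :: "nat \<Rightarrow> 'a::comm_monoid_add mpoly \<Rightarrow> 'a mpoly set" where
  "orbit N p = {perm_act \<sigma> p | \<sigma>. \<sigma> permutes {..<N}}"

definition ideal_gen :: "nat \<Rightarrow> 'a::comm_ring_1 mpoly set \<Rightarrow> 'a mpoly set" where
  "ideal_gen N G = {p. \<exists>Q c. finite Q \<and> Q \<subseteq> G \<and> (\<forall>q\<in>Q. in_vars N (c q)) \<and>
                          p = (\<Sum>q\<in>Q. c q * q)}"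

definition eval_mpoly :: "'a::comm_semiring_1 mpoly \<Rightarrow> (nat \<Rightarrow> 'a) \<Rightarrow> 'a" where
  "eval_mpoly p a = (\<Sum>\<alpha>\<in>Poly_Mapping.keys p. Poly_Mapping.lookup p \<alpha> *
       (\<Prod>i\<in>Poly_Mapping.keys \<alpha>. a i ^ Poly_Mapping.lookup \<alpha> i))"

definition monom1 :: "(nat \<Rightarrow>\<^sub>0 nat) \<Rightarrow> 'a::{zero,one} mpoly" where
  "monom1 \<alpha> = Poly_Mapping.single \<alpha> 1"

definition prod_first_vars :: "nat \<Rightarrow> 'a::{zero,one} mpoly" where
  "prod_first_vars d = monom1 (\<Sum>i<d. Poly_Mapping.single i 1)"

end

theory Submission
  imports Defs "HOL-Computational_Algebra.Primes"
begin

text \<open>Let I be the ideal generated by the S_N-orbit of f = sum_S c_S x^S. For a set A of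
  variables among x_1..x_n let D_A f = sum_{S \<supseteq> A} c_S x^(S-A) be the derivative of f by
  all variables of A, and let tau map A injectively to fresh variables. Applying the
  transposition (a tau(a)) and subtracting shows prod_{a in A} (x_a - x_tau(a)) * D_A f \<in> I.
  By downward induction on k = |A| every product prod_{a in A} (x_a - x_tau(a)) * x^C with
  |A| + |C| = d lies in I: modulo the products of level k + 1 a variable of x^C can be exchanged
  for any other fresh one, so D_A f(1,...,1) times a level-k product lies in I, and some A of
  size k has D_A f(1,...,1) \<noteq> 0 because these values sum to (d choose k) f(1,...,1).
  Level 0 says that all square-free monomials of degree d lie in I. Conversely, the
  coefficient sum p(1,...,1) vanishes on all of I once it vanishes on f, but it is 1 on every
  monomial.\<close>

lemma poly_mapping_expand:
  "p = (\<Sum>k\<in>Poly_Mapping.keys p. Poly_Mapping.single k (Poly_Mapping.lookup p k))"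
proof (rule poly_mapping_eqI)
  fix x
  show "Poly_Mapping.lookup p x =
      Poly_Mapping.lookup (\<Sum>k\<in>Poly_Mapping.keys p. Poly_Mapping.single k (Poly_Mapping.lookup p k)) x"
    by (cases "x \<in> Poly_Mapping.keys p")
       (simp_all add: lookup_sum lookup_single when_def in_keys_iff sum.neutral
         sum.delta[of _ x "\<lambda>k. Poly_Mapping.lookup p k"])
qed

lemma single_sum: "Poly_Mapping.single k (sum g A) = (\<Sum>a\<in>A. Poly_Mapping.single k (g a))"
  by (induction A rule: infinite_finite_induct) (simp_all add: single_add)

subsection \<open>Renaming variables\<close>

lemma rename_mono_zero [simp]: "rename_mono \<sigma> 0 = 0"
  by (simp add: rename_mono_def)

lemma rename_mono_add: "rename_mono \<sigma> (\<alpha> + \<beta>) = rename_mono \<sigma> \<alpha> + rename_mono \<sigma> \<beta>"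
  unfolding rename_mono_def by (rule setsum_keys_plus_distrib) (simp_all add: single_add)

lemma rename_mono_single [simp]:
  "rename_mono \<sigma> (Poly_Mapping.single i k) = Poly_Mapping.single (\<sigma> i) k"
  by (cases "k = 0") (simp_all add: rename_mono_def)

lemma rename_mono_sum: "rename_mono \<sigma> (sum g A) = (\<Sum>a\<in>A. rename_mono \<sigma> (g a))"
  by (induction A rule: infinite_finite_induct) (simp_all add: rename_mono_add)

lemma rename_mono_rename_mono: "rename_mono \<sigma> (rename_mono \<tau> \<alpha>) = rename_mono (\<sigma> \<circ> \<tau>) \<alpha>"
  by (subst (1 2) poly_mapping_expand[of \<alpha>]) (simp add: rename_mono_sum)

lemma rename_mono_id_on:
  assumes "\<And>i. i \<in> Poly_Mapping.keys \<alpha> \<Longrightarrow> \<sigma> i = i"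
  shows "rename_mono \<sigma> \<alpha> = \<alpha>"
  by (subst (1 2) poly_mapping_expand[of \<alpha>]) (simp add: rename_mono_sum assms)

lemma keys_rename_mono: "Poly_Mapping.keys (rename_mono \<sigma> \<alpha>) \<subseteq> \<sigma> ` Poly_Mapping.keys \<alpha>"
  unfolding rename_mono_def by (rule order.trans[OF keys_sum]) auto

lemma perm_act_zero [simp]: "perm_act \<sigma> 0 = 0"
  by (simp add: perm_act_def)

lemma perm_act_add: "perm_act \<sigma> (p + q) = perm_act \<sigma> p + perm_act \<sigma> q"
  unfolding perm_act_def by (rule setsum_keys_plus_distrib) (simp_all add: single_add)

lemma perm_act_single [simp]:
  "perm_act \<sigma> (Poly_Mapping.single \<alpha> k) = Poly_Mapping.single (rename_mono \<sigma> \<alpha>) k"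
  by (cases "k = 0") (simp_all add: perm_act_def)

lemma perm_act_sum: "perm_act \<sigma> (sum g A) = (\<Sum>a\<in>A. perm_act \<sigma> (g a))"
  by (induction A rule: infinite_finite_induct) (simp_all add: perm_act_add)

lemma perm_act_diff: "perm_act \<sigma> (p - q) = perm_act \<sigma> p - perm_act \<sigma> (q::'a::ab_group_add mpoly)"
  using perm_act_add[of \<sigma> "p - q" q] by (simp add: eq_diff_eq)

lemma perm_act_mult: "perm_act \<sigma> (p * q) = perm_act \<sigma> p * perm_act \<sigma> (q::'a::comm_semiring_1 mpoly)"
proof -
  have "p * q = (\<Sum>\<alpha>\<in>Poly_Mapping.keys p. \<Sum>\<beta>\<in>Poly_Mapping.keys q.
      Poly_Mapping.single \<alpha> (Poly_Mapping.lookup p \<alpha>) * Poly_Mapping.single \<beta> (Poly_Mapping.lookup q \<beta>))"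
    by (subst poly_mapping_expand[of p], subst poly_mapping_expand[of q]) (simp add: sum_product)
  then have "perm_act \<sigma> (p * q) = (\<Sum>\<alpha>\<in>Poly_Mapping.keys p. \<Sum>\<beta>\<in>Poly_Mapping.keys q.
      Poly_Mapping.single (rename_mono \<sigma> \<alpha>) (Poly_Mapping.lookup p \<alpha>) *
      Poly_Mapping.single (rename_mono \<sigma> \<beta>) (Poly_Mapping.lookup q \<beta>))"
    by (simp add: perm_act_sum mult_single rename_mono_add)
  also have "\<dots> = perm_act \<sigma> p * perm_act \<sigma> q"
    by (simp add: perm_act_def sum_product)
  finally show ?thesis .
qed

lemma perm_act_one [simp]: "perm_act \<sigma> (1::'a::comm_semiring_1 mpoly) = 1"
  using perm_act_single[of \<sigma> 0 "1::'a"] by simp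

lemma perm_act_prod: "perm_act \<sigma> (prod g A) = (\<Prod>a\<in>A. perm_act \<sigma> (g a :: 'a::comm_semiring_1 mpoly))"
  by (induction A rule: infinite_finite_induct) (simp_all add: perm_act_mult)

lemma perm_act_perm_act: "perm_act \<sigma> (perm_act \<tau> p) = perm_act (\<sigma> \<circ> \<tau>) p"
  by (simp add: perm_act_def[of \<tau>] perm_act_sum rename_mono_rename_mono) (simp add: perm_act_def)

lemma keys_perm_act: "Poly_Mapping.keys (perm_act \<sigma> p) \<subseteq> rename_mono \<sigma> ` Poly_Mapping.keys p"
  unfolding perm_act_def by (rule order.trans[OF keys_sum]) auto

definition vars :: "'a::zero mpoly \<Rightarrow> nat set" where
  "vars p = (\<Union>\<alpha>\<in>Poly_Mapping.keys p. Poly_Mapping.keys \<alpha>)"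

lemma in_vars_iff_vars: "in_vars N p \<longleftrightarrow> vars p \<subseteq> {..<N}"
  by (auto simp: in_vars_def vars_def)

lemma vars_zero [simp]: "vars 0 = {}"
  by (simp add: vars_def)

lemma vars_const [simp]: "vars (Poly_Mapping.single 0 k) = {}"
  by (simp add: vars_def)

lemma vars_one [simp]: "vars (1::'a::comm_semiring_1 mpoly) = {}"
  by (simp add: vars_def)

lemma vars_uminus [simp]: "vars (- p) = vars (p::'a::ab_group_add mpoly)"
  by (simp add: vars_def)

lemma vars_add: "vars (p + q) \<subseteq> vars p \<union> vars q"
  unfolding vars_def using keys_add[of p q] by auto

lemma vars_diff: "vars (p - q) \<subseteq> vars p \<union> vars (q::'a::ab_group_add mpoly)"
  using vars_add[of p "- q"] by simp

lemma vars_mult: "vars (p * q) \<subseteq> vars p \<union> vars (q::'a::comm_semiring_1 mpoly)"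
proof
  fix i assume "i \<in> vars (p * q)"
  then obtain \<gamma> where \<gamma>: "\<gamma> \<in> Poly_Mapping.keys (p * q)" "i \<in> Poly_Mapping.keys \<gamma>"
    unfolding vars_def by blast
  then obtain \<alpha> \<beta> where "\<gamma> = \<alpha> + \<beta>" "\<alpha> \<in> Poly_Mapping.keys p" "\<beta> \<in> Poly_Mapping.keys q"
    using keys_mult[of p q] by blast
  then show "i \<in> vars p \<union> vars q"
    using \<gamma>(2) keys_add[of \<alpha> \<beta>] unfolding vars_def by blast
qed

lemma vars_sum: "vars (sum g A) \<subseteq> (\<Union>a\<in>A. vars (g a))"
proof (induction A rule: infinite_finite_induct)
  case (insert x F)
  then show ?case using vars_add[of "g x" "sum g F"] by auto
qed auto

lemma vars_prod: "vars (prod g A) \<subseteq> (\<Union>a\<in>A. vars (g a :: 'a::comm_semiring_1 mpoly))"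
proof (induction A rule: infinite_finite_induct)
  case (insert x F)
  then show ?case using vars_mult[of "g x" "prod g F"] by auto
qed auto

lemma vars_perm_act: "vars (perm_act \<sigma> p) \<subseteq> \<sigma> ` vars p"
  unfolding vars_def using keys_perm_act[of \<sigma> p] keys_rename_mono[of \<sigma>] by blast

lemma perm_act_id_on_vars:
  assumes "vars p \<subseteq> B" "\<And>i. i \<in> B \<Longrightarrow> \<sigma> i = i"
  shows "perm_act \<sigma> p = p"
proof -
  have "perm_act \<sigma> p = (\<Sum>\<alpha>\<in>Poly_Mapping.keys p. Poly_Mapping.single \<alpha> (Poly_Mapping.lookup p \<alpha>))"
    unfolding perm_act_def
  proof (rule sum.cong)
    fix \<alpha> assume "\<alpha> \<in> Poly_Mapping.keys p"
    then have "rename_mono \<sigma> \<alpha> = \<alpha>"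
      using assms by (intro rename_mono_id_on) (auto simp: vars_def)
    then show "Poly_Mapping.single (rename_mono \<sigma> \<alpha>) (Poly_Mapping.lookup p \<alpha>) =
        Poly_Mapping.single \<alpha> (Poly_Mapping.lookup p \<alpha>)" by simp
  qed simp
  then show ?thesis using poly_mapping_expand[of p] by simp
qed

lemma in_vars_zero [simp]: "in_vars N 0"
  by (simp add: in_vars_iff_vars)

lemma in_vars_one [simp]: "in_vars N (1::'a::comm_semiring_1 mpoly)"
  by (simp add: in_vars_iff_vars)

lemma in_vars_add: "in_vars N p \<Longrightarrow> in_vars N q \<Longrightarrow> in_vars N (p + q)"
  using vars_add[of p q] by (auto simp: in_vars_iff_vars)

lemma in_vars_mult: "in_vars N p \<Longrightarrow> in_vars N q \<Longrightarrow> in_vars N (p * (q::'a::comm_semiring_1 mpoly))"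
  using vars_mult[of p q] by (auto simp: in_vars_iff_vars)

lemma in_vars_perm_act:
  assumes "\<sigma> permutes {..<N}" "in_vars N p"
  shows "in_vars N (perm_act \<sigma> p)"
  using vars_perm_act[of \<sigma> p] image_mono[of "vars p" "{..<N}" \<sigma>] permutes_image[OF assms(1)] assms(2)
  by (auto simp: in_vars_iff_vars)

subsection \<open>Ideals generated by orbits\<close>

lemma ideal_gen_generator: "q \<in> G \<Longrightarrow> q \<in> ideal_gen N G"
  unfolding ideal_gen_def by (rule CollectI, rule exI[of _ "{q}"], rule exI[of _ "\<lambda>_. 1"]) simp

lemma ideal_gen_zero: "0 \<in> ideal_gen N G"
  unfolding ideal_gen_def by (rule CollectI, rule exI[of _ "{}"]) simp

lemma ideal_gen_add:
  assumes "p \<in> ideal_gen N G" "p' \<in> ideal_gen N G"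
  shows "p + p' \<in> ideal_gen N G"
proof -
  obtain Q c where Q: "finite Q" "Q \<subseteq> G" "\<forall>q\<in>Q. in_vars N (c q)" "p = (\<Sum>q\<in>Q. c q * q)"
    using assms(1) unfolding ideal_gen_def by blast
  obtain Q' c' where Q': "finite Q'" "Q' \<subseteq> G" "\<forall>q\<in>Q'. in_vars N (c' q)" "p' = (\<Sum>q\<in>Q'. c' q * q)"
    using assms(2) unfolding ideal_gen_def by blast
  define e where "e q = (if q \<in> Q then c q else 0) + (if q \<in> Q' then c' q else 0)" for q
  have "(\<Sum>q\<in>Q \<union> Q'. e q * q) = (\<Sum>q\<in>Q \<union> Q'. if q \<in> Q then c q * q else 0)
      + (\<Sum>q\<in>Q \<union> Q'. if q \<in> Q' then c' q * q else 0)"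
    unfolding sum.distrib[symmetric] by (rule sum.cong) (auto simp: e_def distrib_right)
  also have "\<dots> = p + p'"
    unfolding Q(4) Q'(4) using Q(1) Q'(1)
    by (simp add: sum.If_cases Int_absorb1 Int_absorb2)
  finally have eq: "p + p' = (\<Sum>q\<in>Q \<union> Q'. e q * q)" by simp
  have "\<forall>q\<in>Q \<union> Q'. in_vars N (e q)"
    using Q(3) Q'(3) by (auto simp: e_def intro!: in_vars_add)
  then show ?thesis
    unfolding ideal_gen_def using Q(1,2) Q'(1,2) eq by (intro CollectI exI[of _ "Q \<union> Q'"] exI[of _ e]) simp
qed

lemma ideal_gen_mult:
  assumes "p \<in> ideal_gen N G" "in_vars N r"
  shows "r * p \<in> ideal_gen N G"
proof -
  obtain Q c where Q: "finite Q" "Q \<subseteq> G" "\<forall>q\<in>Q. in_vars N (c q)" "p = (\<Sum>q\<in>Q. c q * q)"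
    using assms(1) unfolding ideal_gen_def by blast
  have eq: "r * p = (\<Sum>q\<in>Q. (r * c q) * q)"
    unfolding Q(4) by (simp add: sum_distrib_left mult.assoc)
  have "\<forall>q\<in>Q. in_vars N (r * c q)"
    using Q(3) assms(2) by (auto intro: in_vars_mult)
  then show ?thesis
    unfolding ideal_gen_def using Q(1,2) eq by (intro CollectI exI[of _ Q] exI[of _ "\<lambda>q. r * c q"]) simp
qed

lemma ideal_gen_diff:
  assumes "p \<in> ideal_gen N G" "p' \<in> ideal_gen N G"
  shows "p - p' \<in> ideal_gen N G"
proof -
  have "in_vars N (- 1 :: 'a mpoly)"
    by (simp add: in_vars_iff_vars)
  from ideal_gen_add[OF assms(1) ideal_gen_mult[OF assms(2) this]] show ?thesis
    by simp
qed

lemma ideal_gen_sum: "(\<And>i. i \<in> A \<Longrightarrow> g i \<in> ideal_gen N G) \<Longrightarrow> sum g A \<in> ideal_gen N G"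
  by (induction A rule: infinite_finite_induct) (auto intro: ideal_gen_zero ideal_gen_add)

lemma ideal_gen_const_mult_cancel:
  assumes "Poly_Mapping.single 0 c * p \<in> ideal_gen N G" "c \<noteq> (0::'a::field)"
  shows "p \<in> ideal_gen N G"
proof -
  have "Poly_Mapping.single 0 (inverse c) * (Poly_Mapping.single 0 c * p) \<in> ideal_gen N G"
    by (rule ideal_gen_mult[OF assms(1)]) (simp add: in_vars_iff_vars)
  then show ?thesis
    using assms(2) by (simp add: mult.assoc[symmetric] mult_single)
qed

lemma ideal_gen_minimal:
  assumes "G \<subseteq> ideal_gen N H"
  shows "ideal_gen N G \<subseteq> ideal_gen N H"
proof
  fix p assume "p \<in> ideal_gen N G"
  then obtain Q c where Q: "finite Q" "Q \<subseteq> G" "\<forall>q\<in>Q. in_vars N (c q)" "p = (\<Sum>q\<in>Q. c q * q)"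
    unfolding ideal_gen_def by blast
  show "p \<in> ideal_gen N H"
    unfolding Q(4) by (rule ideal_gen_sum) (use Q assms in \<open>auto intro: ideal_gen_mult\<close>)
qed

lemma perm_act_ideal_gen:
  assumes "\<sigma> permutes {..<N}" "\<And>q. q \<in> G \<Longrightarrow> perm_act \<sigma> q \<in> ideal_gen N G"
    and "p \<in> ideal_gen N G"
  shows "perm_act \<sigma> p \<in> ideal_gen N G"
proof -
  obtain Q c where Q: "finite Q" "Q \<subseteq> G" "\<forall>q\<in>Q. in_vars N (c q)" "p = (\<Sum>q\<in>Q. c q * q)"
    using assms(3) unfolding ideal_gen_def by blast
  have "perm_act \<sigma> p = (\<Sum>q\<in>Q. perm_act \<sigma> (c q) * perm_act \<sigma> q)"
    by (simp add: Q(4) perm_act_sum perm_act_mult)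
  also have "\<dots> \<in> ideal_gen N G"
    by (rule ideal_gen_sum) (use Q assms in \<open>auto intro!: ideal_gen_mult in_vars_perm_act\<close>)
  finally show ?thesis .
qed

lemma perm_act_orbit_ideal:
  assumes "\<sigma> permutes {..<N}" "p \<in> ideal_gen N (orbit N f)"
  shows "perm_act \<sigma> p \<in> ideal_gen N (orbit N f)"
proof (rule perm_act_ideal_gen[OF assms(1) _ assms(2)])
  fix q assume "q \<in> orbit N f"
  then obtain \<tau> where "\<tau> permutes {..<N}" "q = perm_act \<tau> f"
    unfolding orbit_def by blast
  then show "perm_act \<sigma> q \<in> ideal_gen N (orbit N f)"
    using assms(1) by (auto simp: perm_act_perm_act orbit_def intro!: ideal_gen_generator permutes_compose)
qed

lemma self_in_orbit_ideal: "f \<in> ideal_gen N (orbit N f)"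
proof (rule ideal_gen_generator)
  have "perm_act id f = f"
    by (rule perm_act_id_on_vars[of _ UNIV]) simp_all
  then show "f \<in> orbit N f"
    unfolding orbit_def by (metis (mono_tags, lifting) mem_Collect_eq permutes_id)
qed

subsection \<open>The coefficient sum\<close>

definition coeff_sum :: "'a::comm_monoid_add mpoly \<Rightarrow> 'a" where
  "coeff_sum p = (\<Sum>\<alpha>\<in>Poly_Mapping.keys p. Poly_Mapping.lookup p \<alpha>)"

lemma eval_mpoly_one: "eval_mpoly p (\<lambda>_. 1) = coeff_sum p"
  by (simp add: eval_mpoly_def coeff_sum_def)

lemma coeff_sum_add: "coeff_sum (p + q) = coeff_sum p + coeff_sum q"
  unfolding coeff_sum_def by (rule setsum_keys_plus_distrib) simp_all

lemma coeff_sum_single [simp]: "coeff_sum (Poly_Mapping.single \<alpha> k) = k"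
  by (cases "k = 0") (simp_all add: coeff_sum_def)

lemma coeff_sum_zero [simp]: "coeff_sum 0 = 0"
  by (simp add: coeff_sum_def)

lemma coeff_sum_sum: "coeff_sum (sum g A) = (\<Sum>a\<in>A. coeff_sum (g a))"
  by (induction A rule: infinite_finite_induct) (simp_all add: coeff_sum_add)

lemma coeff_sum_mult: "coeff_sum (p * q) = coeff_sum p * coeff_sum (q::'a::comm_semiring_1 mpoly)"
proof -
  have "p * q = (\<Sum>\<alpha>\<in>Poly_Mapping.keys p. \<Sum>\<beta>\<in>Poly_Mapping.keys q.
      Poly_Mapping.single \<alpha> (Poly_Mapping.lookup p \<alpha>) * Poly_Mapping.single \<beta> (Poly_Mapping.lookup q \<beta>))"
    by (subst poly_mapping_expand[of p], subst poly_mapping_expand[of q]) (simp add: sum_product)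
  then show ?thesis
    by (simp add: coeff_sum_sum mult_single coeff_sum_def[of p] coeff_sum_def[of q] sum_product)
qed

lemma coeff_sum_power: "coeff_sum (p ^ k) = coeff_sum (p::'a::comm_semiring_1 mpoly) ^ k"
  by (induction k) (simp_all add: coeff_sum_mult flip: single_one)

lemma coeff_sum_perm_act: "coeff_sum (perm_act \<sigma> p) = coeff_sum p"
  by (simp add: perm_act_def coeff_sum_sum coeff_sum_def[of p])

lemma coeff_sum_orbit_ideal:
  assumes "coeff_sum f = 0" "p \<in> ideal_gen N (orbit N f)"
  shows "coeff_sum p = 0"
proof -
  obtain Q c where Q: "Q \<subseteq> orbit N f" "p = (\<Sum>q\<in>Q. c q * q)"
    using assms(2) unfolding ideal_gen_def by blast
  have "\<forall>q\<in>Q. coeff_sum q = 0"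
    using Q(1) assms(1) by (auto simp: orbit_def coeff_sum_perm_act)
  then show ?thesis
    unfolding Q(2) by (simp add: coeff_sum_sum coeff_sum_mult)
qed

lemma monom1_power_notin_orbit_ideal:
  assumes "coeff_sum f = 0"
  shows "monom1 \<alpha> ^ k \<notin> ideal_gen N (orbit N (f::'a::comm_ring_1 mpoly))"
  using coeff_sum_orbit_ideal[OF assms, of "monom1 \<alpha> ^ k"]
  by (auto simp: coeff_sum_power monom1_def)

definition sqfree_mono :: "nat set \<Rightarrow> (nat \<Rightarrow>\<^sub>0 nat)" where
  "sqfree_mono S = (\<Sum>i\<in>S. Poly_Mapping.single i 1)"

definition var_prod :: "nat set \<Rightarrow> 'a::comm_semiring_1 mpoly" where
  "var_prod S = monom1 (sqfree_mono S)"

lemma lookup_sqfree_mono: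
  "finite S \<Longrightarrow> Poly_Mapping.lookup (sqfree_mono S) i = (if i \<in> S then 1 else 0)"
  by (simp add: sqfree_mono_def lookup_sum lookup_single when_def)

lemma keys_sqfree_mono: "finite S \<Longrightarrow> Poly_Mapping.keys (sqfree_mono S) = S"
  by (auto simp: in_keys_iff lookup_sqfree_mono split: if_splits)

lemma sqfree_mono_keys:
  assumes "\<And>i. Poly_Mapping.lookup \<alpha> i \<le> 1"
  shows "sqfree_mono (Poly_Mapping.keys \<alpha>) = \<alpha>"
proof (rule poly_mapping_eqI)
  fix i
  show "Poly_Mapping.lookup (sqfree_mono (Poly_Mapping.keys \<alpha>)) i = Poly_Mapping.lookup \<alpha> i"
    using assms[of i] by (auto simp: lookup_sqfree_mono in_keys_iff)
qed

lemma var_prod_union: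
  "finite S \<Longrightarrow> finite T \<Longrightarrow> S \<inter> T = {} \<Longrightarrow> var_prod (S \<union> T) = var_prod S * var_prod T"
  by (simp add: var_prod_def monom1_def sqfree_mono_def sum.union_disjoint mult_single)

lemma var_prod_insert:
  "finite S \<Longrightarrow> i \<notin> S \<Longrightarrow> var_prod (insert i S) = var_prod {i} * var_prod S"
  using var_prod_union[of "{i}" S] by simp

lemma const_mult_var_prod:
  "Poly_Mapping.single 0 c * var_prod S = Poly_Mapping.single (sqfree_mono S) c"
  by (simp add: var_prod_def monom1_def mult_single)

lemma vars_var_prod [simp]: "finite S \<Longrightarrow> vars (var_prod S) = S"
  by (simp add: vars_def var_prod_def monom1_def keys_sqfree_mono)

lemma vars_sum_const_var_prod:
  assumes "\<And>S. S \<in> Q \<Longrightarrow> finite (h S)"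
  shows "vars (\<Sum>S\<in>Q. Poly_Mapping.single 0 (c S) * var_prod (h S)) \<subseteq> (\<Union>S\<in>Q. h S)"
  using vars_sum[of "\<lambda>S. Poly_Mapping.single 0 (c S) * var_prod (h S)" Q]
    vars_mult[of "Poly_Mapping.single 0 (c _)" "var_prod (h _)"] assms
  by fastforce

lemma perm_act_var_prod:
  assumes "finite S" "inj_on \<sigma> S"
  shows "perm_act \<sigma> (var_prod S) = var_prod (\<sigma> ` S)"
  using assms by (simp add: var_prod_def monom1_def sqfree_mono_def rename_mono_sum sum.reindex)

lemma prod_first_vars_eq_var_prod: "prod_first_vars d = var_prod {..<d}"
  by (simp add: prod_first_vars_def var_prod_def sqfree_mono_def)

lemma permutes_extend:
  assumes "finite S" "D \<subseteq> S" "inj_on h D" "h ` D \<subseteq> S"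
  obtains \<sigma> where "\<sigma> permutes S" "\<And>x. x \<in> D \<Longrightarrow> \<sigma> x = h x"
proof -
  have "card (S - D) = card (S - h ` D)"
    using assms by (simp add: card_Diff_subset card_image finite_subset)
  then obtain g where g: "bij_betw g (S - D) (S - h ` D)"
    using finite_same_card_bij[of "S - D" "S - h ` D"] assms(1) by auto
  define \<sigma> where "\<sigma> x = (if x \<in> D then h x else if x \<in> S then g x else x)" for x
  have "bij_betw \<sigma> D (h ` D)"
    using assms(3) by (simp add: bij_betw_def inj_on_def \<sigma>_def)
  moreover have "bij_betw \<sigma> (S - D) (S - h ` D)"
    using g by (rule bij_betw_cong[THEN iffD1, rotated]) (simp add: \<sigma>_def)
  ultimately have "bij_betw \<sigma> (D \<union> (S - D)) (h ` D \<union> (S - h ` D))"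
    by (rule bij_betw_combine) blast
  then have "bij_betw \<sigma> S S"
    using assms(2,4) by (simp add: Un_absorb1 Un_Diff_cancel)
  then have "\<sigma> permutes S"
    by (rule bij_imp_permutes) (use assms(2) in \<open>auto simp: \<sigma>_def\<close>)
  then show thesis
    using that by (simp add: \<sigma>_def)
qed

lemma orbit_prod_first_vars:
  assumes "d \<le> N"
  shows "orbit N (prod_first_vars d :: 'a::comm_semiring_1 mpoly) = {var_prod C | C. C \<subseteq> {..<N} \<and> card C = d}"
    (is "?L = ?R")
proof (intro equalityI subsetI)
  fix q assume "q \<in> ?L"
  then obtain \<sigma> where \<sigma>: "\<sigma> permutes {..<N}" "q = perm_act \<sigma> (var_prod {..<d})"
    unfolding orbit_def prod_first_vars_eq_var_prod by blast
  have "inj_on \<sigma> {..<d}"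
    using permutes_inj_on[OF \<sigma>(1)] .
  moreover have "\<sigma> ` {..<d} \<subseteq> {..<N}"
    using permutes_image[OF \<sigma>(1)] assms by auto
  ultimately show "q \<in> ?R"
    using \<sigma>(2) by (auto simp: perm_act_var_prod card_image)
next
  fix q assume "q \<in> ?R"
  then obtain C where C: "C \<subseteq> {..<N}" "card C = d" "q = var_prod C"
    by blast
  then obtain \<beta> where \<beta>: "bij_betw \<beta> {..<d} C"
    using finite_same_card_bij[of "{..<d}" C] finite_subset by auto
  then obtain \<sigma> where \<sigma>: "\<sigma> permutes {..<N}" "\<And>x. x < d \<Longrightarrow> \<sigma> x = \<beta> x"
    using permutes_extend[of "{..<N}" "{..<d}" \<beta>] assms C(1) by (auto simp: bij_betw_def)
  have "\<sigma> ` {..<d} = C"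
    using \<beta> \<sigma>(2) by (auto simp: bij_betw_def)
  then have "perm_act \<sigma> (prod_first_vars d) = q"
    using permutes_inj_on[OF \<sigma>(1)] C(3) by (simp add: prod_first_vars_eq_var_prod perm_act_var_prod)
  then show "q \<in> orbit N (prod_first_vars d)"
    unfolding orbit_def using \<sigma>(1) by blast
qed

subsection \<open>Products of differences\<close>

definition diff_prod :: "nat set \<Rightarrow> (nat \<Rightarrow> nat) \<Rightarrow> 'a::comm_ring_1 mpoly" where
  "diff_prod A \<tau> = (\<Prod>a\<in>A. var_prod {a} - var_prod {\<tau> a})"

definition disjoint_config :: "nat \<Rightarrow> nat set \<Rightarrow> (nat \<Rightarrow> nat) \<Rightarrow> nat set \<Rightarrow> bool" where
  "disjoint_config N A \<tau> C \<longleftrightarrow> A \<union> \<tau> ` A \<union> C \<subseteq> {..<N} \<and> inj_on \<tau> A \<and>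
     A \<inter> \<tau> ` A = {} \<and> C \<inter> (A \<union> \<tau> ` A) = {}"

definition config_poly :: "nat set \<Rightarrow> (nat \<Rightarrow> nat) \<Rightarrow> nat set \<Rightarrow> 'a::comm_ring_1 mpoly" where
  "config_poly A \<tau> C = diff_prod A \<tau> * var_prod C"

lemma vars_diff_prod: "vars (diff_prod A \<tau> :: 'a::comm_ring_1 mpoly) \<subseteq> A \<union> \<tau> ` A"
  unfolding diff_prod_def using vars_prod[of "\<lambda>a. var_prod {a} - var_prod {\<tau> a} :: 'a mpoly" A]
    vars_diff[of "var_prod {_} :: 'a mpoly" "var_prod {_}"]
  by fastforce

lemma diff_prod_insert:
  "finite A \<Longrightarrow> a \<notin> A \<Longrightarrow> diff_prod (insert a A) \<tau> = (var_prod {a} - var_prod {\<tau> a}) * diff_prod A \<tau>"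
  by (simp add: diff_prod_def)

lemma diff_prod_cong: "(\<And>a. a \<in> A \<Longrightarrow> \<tau> a = \<tau>' a) \<Longrightarrow> diff_prod A \<tau> = diff_prod A \<tau>'"
  unfolding diff_prod_def by (rule prod.cong) simp_all

lemma perm_act_config_poly:
  assumes "inj \<sigma>" "finite C" "\<And>a. a \<in> A \<Longrightarrow> \<sigma> (\<tau> a) = \<tau>' (\<sigma> a)"
  shows "perm_act \<sigma> (config_poly A \<tau> C) = config_poly (\<sigma> ` A) \<tau>' (\<sigma> ` C)"
proof -
  have inj: "inj_on \<sigma> X" for X
    using assms(1) by (rule inj_on_subset) simp
  have "perm_act \<sigma> (diff_prod A \<tau>) = (\<Prod>a\<in>A. var_prod {\<sigma> a} - var_prod {\<tau>' (\<sigma> a)} :: 'a mpoly)"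
    unfolding diff_prod_def perm_act_prod
    by (rule prod.cong) (simp_all add: perm_act_diff perm_act_var_prod assms(3))
  also have "\<dots> = diff_prod (\<sigma> ` A) \<tau>'"
    unfolding diff_prod_def by (simp add: prod.reindex[OF inj])
  finally have "perm_act \<sigma> (diff_prod A \<tau>) = (diff_prod (\<sigma> ` A) \<tau>' :: 'a mpoly)" .
  then show ?thesis
    unfolding config_poly_def perm_act_mult using assms(2) inj by (simp add: perm_act_var_prod)
qed

lemma disjoint_config_finite:
  "disjoint_config N A \<tau> C \<Longrightarrow> finite A \<and> finite C"
  unfolding disjoint_config_def by (metis finite_lessThan finite_subset le_sup_iff)

lemma disjoint_config_transfer:
  assumes cfg: "disjoint_config N A \<tau> C" "disjoint_config N A' \<tau>' C'"
    and card: "card A' = card A" "card C' = card C"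
  obtains \<sigma> where "\<sigma> permutes {..<N}" "\<sigma> ` A = A'" "\<sigma> ` C = C'"
    "\<And>a. a \<in> A \<Longrightarrow> \<sigma> (\<tau> a) = \<tau>' (\<sigma> a)"
proof -
  have fin: "finite A" "finite C" "finite A'" "finite C'"
    using cfg disjoint_config_finite by blast+
  obtain \<beta> where \<beta>: "bij_betw \<beta> A A'"
    using finite_same_card_bij[of A A'] fin card by auto
  obtain \<gamma> where \<gamma>: "bij_betw \<gamma> C C'"
    using finite_same_card_bij[of C C'] fin card by auto
  have inj\<tau>: "inj_on \<tau> A" and disj: "A \<inter> \<tau> ` A = {}" "C \<inter> (A \<union> \<tau> ` A) = {}"
    using cfg(1) by (auto simp: disjoint_config_def)
  define D where "D = A \<union> \<tau> ` A \<union> C"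
  define h where "h x = (if x \<in> A then \<beta> x
      else if x \<in> \<tau> ` A then \<tau>' (\<beta> (the_inv_into A \<tau> x)) else \<gamma> x)" for x
  have hA: "h a = \<beta> a" and h\<tau>: "h (\<tau> a) = \<tau>' (\<beta> a)" if "a \<in> A" for a
    using that disj inj\<tau> by (auto simp: h_def the_inv_into_f_f)
  have hC: "h x = \<gamma> x" if "x \<in> C" for x
    using that disj by (auto simp: h_def)
  have "h ` A = \<beta> ` A" "h ` C = \<gamma> ` C"
    by (auto simp: hA hC intro: image_cong)
  moreover have "h ` \<tau> ` A = \<tau>' ` \<beta> ` A"
    unfolding image_image by (rule image_cong) (simp_all add: h\<tau>)
  ultimately have "h ` A = A'" "h ` \<tau> ` A = \<tau>' ` A'" "h ` C = C'"
    using \<beta> \<gamma> by (simp_all add: bij_betw_def)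
  then have img: "h ` D = A' \<union> \<tau>' ` A' \<union> C'"
    unfolding D_def image_Un by simp
  have "card (A' \<union> \<tau>' ` A' \<union> C') = card A' + card A' + card C'"
    using fin cfg(2) unfolding disjoint_config_def
    by (simp add: card_Un_disjoint card_image Int_Un_distrib Int_commute)
  also have "\<dots> = card D"
    unfolding D_def using fin disj inj\<tau> card
    by (simp add: card_Un_disjoint card_image Int_Un_distrib Int_commute)
  finally have "card (h ` D) = card D"
    by (simp only: img)
  then have inj: "inj_on h D"
    using fin by (intro eq_card_imp_inj_on) (simp_all add: D_def)
  have D: "D \<subseteq> {..<N}"
    using cfg(1) by (auto simp: disjoint_config_def D_def)
  have hD: "h ` D \<subseteq> {..<N}"
    unfolding img using cfg(2) by (auto simp: disjoint_config_def)
  obtain \<sigma> where \<sigma>: "\<sigma> permutes {..<N}" "\<And>x. x \<in> D \<Longrightarrow> \<sigma> x = h x"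
    using permutes_extend[OF finite_lessThan D inj hD] by blast
  show thesis
  proof
    show "\<sigma> ` A = A'" "\<sigma> ` C = C'"
      using \<beta> \<gamma> \<sigma>(2) hA hC by (auto simp: D_def bij_betw_def)
    show "\<sigma> (\<tau> a) = \<tau>' (\<sigma> a)" if "a \<in> A" for a
      using that \<sigma>(2) hA h\<tau> by (simp add: D_def)
  qed (fact \<sigma>(1))
qed

lemma config_poly_orbit_ideal_transfer:
  assumes "config_poly A \<tau> C \<in> ideal_gen N (orbit N (f::'a::comm_ring_1 mpoly))"
    and "disjoint_config N A \<tau> C" "disjoint_config N A' \<tau>' C'"
    and "card A' = card A" "card C' = card C"
  shows "config_poly A' \<tau>' C' \<in> ideal_gen N (orbit N f)"
proof -
  obtain \<sigma> where \<sigma>: "\<sigma> permutes {..<N}" "\<sigma> ` A = A'" "\<sigma> ` C = C'"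
    "\<And>a. a \<in> A \<Longrightarrow> \<sigma> (\<tau> a) = \<tau>' (\<sigma> a)"
    using disjoint_config_transfer[OF assms(2-5)] by blast
  have "finite C"
    using disjoint_config_finite[OF assms(2)] by simp
  then have "perm_act \<sigma> (config_poly A \<tau> C) = (config_poly (\<sigma> ` A) \<tau>' (\<sigma> ` C) :: 'a mpoly)"
    by (rule perm_act_config_poly[OF permutes_inj[OF \<sigma>(1)]]) (rule \<sigma>(4))
  then have "perm_act \<sigma> (config_poly A \<tau> C) = (config_poly A' \<tau>' C' :: 'a mpoly)"
    by (simp only: \<sigma>(2,3))
  then show ?thesis
    using perm_act_orbit_ideal[OF \<sigma>(1) assms(1)] by simp
qed

lemma disjoint_config_exchange:
  assumes "disjoint_config N A \<tau> U" "u \<in> U" "u' < N" "u' \<notin> U \<union> A \<union> \<tau> ` A"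
  shows "disjoint_config N (insert u A) (\<tau>(u := u')) (U - {u})"
proof -
  have u: "u \<notin> A" "u \<notin> \<tau> ` A"
    using assms(1,2) by (auto simp: disjoint_config_def)
  then have img: "\<tau>(u := u') ` insert u A = insert u' (\<tau> ` A)"
    by auto
  have "inj_on (\<tau>(u := u')) A \<longleftrightarrow> inj_on \<tau> A"
    using u(1) by (intro inj_on_cong) (metis fun_upd_other)
  then have "inj_on (\<tau>(u := u')) (insert u A)"
    using assms(1,4) u(1) img by (auto simp: disjoint_config_def)
  then show ?thesis
    unfolding disjoint_config_def img using assms u by (auto simp: disjoint_config_def)
qed

lemma config_poly_exchange:
  assumes "disjoint_config N A \<tau> U" "u \<in> U" "u' \<notin> U \<union> A \<union> \<tau> ` A"
  shows "diff_prod A \<tau> * var_prod U - diff_prod A \<tau> * var_prod (insert u' (U - {u}))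
    = (config_poly (insert u A) (\<tau>(u := u')) (U - {u}) :: 'a::comm_ring_1 mpoly)"
proof -
  have fin: "finite A" "finite U"
    using disjoint_config_finite[OF assms(1)] by blast+
  have "u \<notin> A"
    using assms(1,2) by (auto simp: disjoint_config_def)
  then have "diff_prod A (\<tau>(u := u')) = (diff_prod A \<tau> :: 'a mpoly)"
    by (intro diff_prod_cong) (metis fun_upd_other)
  then have "config_poly (insert u A) (\<tau>(u := u')) (U - {u})
      = (var_prod {u} - var_prod {u'}) * diff_prod A \<tau> * (var_prod (U - {u}) :: 'a mpoly)"
    using fin \<open>u \<notin> A\<close> by (simp add: config_poly_def diff_prod_insert)
  moreover have "var_prod U = var_prod {u} * (var_prod (U - {u}) :: 'a mpoly)"
    using var_prod_insert[of "U - {u}" u] fin assms(2) by (simp add: insert_absorb)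
  moreover have "var_prod (insert u' (U - {u})) = var_prod {u'} * (var_prod (U - {u}) :: 'a mpoly)"
    using var_prod_insert[of "U - {u}" u'] fin assms(3) by simp
  ultimately show ?thesis
    by (simp add: algebra_simps)
qed


subsection \<open>Square-free forms\<close>

lemma of_nat_choose_neq_zero:
  assumes "CHAR('a::idom) = 0 \<or> d < CHAR('a)" "k \<le> d"
  shows "of_nat (d choose k) \<noteq> (0::'a)"
proof
  assume "of_nat (d choose k) = (0::'a)"
  then have dvd: "CHAR('a) dvd (d choose k)"
    by (simp add: of_nat_eq_0_iff_char_dvd)
  show False
  proof (cases "CHAR('a) = 0")
    case True
    then show ?thesis using dvd assms(2) by simp
  next
    case False
    then have "prime CHAR('a)"
      by (intro prime_CHAR_semidom) simp
    moreover have "(d choose k) dvd fact d"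
      using binomial_fact_lemma[OF assms(2)] by (metis dvd_triv_right)
    then have "CHAR('a) dvd fact d"
      using dvd by (rule dvd_trans[rotated])
    ultimately have "CHAR('a) \<le> d"
      by (simp add: prime_dvd_fact_iff)
    then show False using False assms(1) by simp
  qed
qed

locale sqfree_form =
  fixes f :: "'a::field mpoly" and n d :: nat
  assumes f_vars: "in_vars n f"
    and homog: "\<forall>\<alpha>\<in>Poly_Mapping.keys f. (\<Sum>i\<in>Poly_Mapping.keys \<alpha>. Poly_Mapping.lookup \<alpha> i) = d"
    and sqfree: "\<forall>\<alpha>\<in>Poly_Mapping.keys f. \<forall>i. Poly_Mapping.lookup \<alpha> i \<le> 1"
begin

definition support_sets :: "nat set set" where
  "support_sets = {S. S \<subseteq> {..<n} \<and> card S = d}"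

lemma finite_support_sets: "finite support_sets"
  unfolding support_sets_def by (rule finite_subset[of _ "Pow {..<n}"]) auto

lemma support_set_finite: "S \<in> support_sets \<Longrightarrow> finite S"
  unfolding support_sets_def using finite_subset by blast

lemma keys_f_sqfree_mono:
  assumes "\<alpha> \<in> Poly_Mapping.keys f"
  shows "\<alpha> = sqfree_mono (Poly_Mapping.keys \<alpha>)" "Poly_Mapping.keys \<alpha> \<in> support_sets"
proof -
  show "\<alpha> = sqfree_mono (Poly_Mapping.keys \<alpha>)"
    using sqfree assms by (simp add: sqfree_mono_keys)
  have "(\<Sum>i\<in>Poly_Mapping.keys \<alpha>. Poly_Mapping.lookup \<alpha> i) = (\<Sum>i\<in>Poly_Mapping.keys \<alpha>. 1)"
    by (intro sum.cong refl) (metis assms sqfree in_keys_iff le_antisym less_one not_le)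
  then have "card (Poly_Mapping.keys \<alpha>) = d"
    using homog assms by simp
  moreover have "Poly_Mapping.keys \<alpha> \<subseteq> {..<n}"
    using f_vars assms by (auto simp: in_vars_def)
  ultimately show "Poly_Mapping.keys \<alpha> \<in> support_sets"
    by (simp add: support_sets_def)
qed

lemma d_le_n:
  assumes "f \<noteq> 0"
  shows "d \<le> n"
proof -
  obtain \<alpha> where "\<alpha> \<in> Poly_Mapping.keys f"
    using assms by (metis keys_eq_empty equals0I)
  then have "Poly_Mapping.keys \<alpha> \<subseteq> {..<n}" "card (Poly_Mapping.keys \<alpha>) = d"
    using keys_f_sqfree_mono(2) by (auto simp: support_sets_def)
  then show ?thesis
    using card_mono[OF finite_lessThan, of "Poly_Mapping.keys \<alpha>" n] by simp
qed

text \<open>Since f is square-free, this is the derivative of f by all variables in A.\<close>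

definition deriv_set :: "nat set \<Rightarrow> 'a mpoly" where
  "deriv_set A = (\<Sum>S\<in>{S\<in>support_sets. A \<subseteq> S}.
     Poly_Mapping.single 0 (Poly_Mapping.lookup f (sqfree_mono S)) * var_prod (S - A))"

lemma deriv_set_empty: "deriv_set {} = f"
proof -
  have inj: "inj_on sqfree_mono support_sets"
    by (rule inj_onI) (metis keys_sqfree_mono support_set_finite)
  have "deriv_set {} = (\<Sum>\<alpha>\<in>sqfree_mono ` support_sets. Poly_Mapping.single \<alpha> (Poly_Mapping.lookup f \<alpha>))"
    by (simp add: deriv_set_def const_mult_var_prod sum.reindex[OF inj])
  also have "\<dots> = (\<Sum>\<alpha>\<in>Poly_Mapping.keys f. Poly_Mapping.single \<alpha> (Poly_Mapping.lookup f \<alpha>))"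
    using finite_support_sets keys_f_sqfree_mono
    by (intro sum.mono_neutral_right) (auto simp: in_keys_iff)
  finally show ?thesis
    using poly_mapping_expand[of f] by simp
qed

lemma vars_deriv_set: "vars (deriv_set A) \<subseteq> {..<n} - A"
  unfolding deriv_set_def
  by (rule order.trans[OF vars_sum_const_var_prod])
     (auto simp: support_sets_def intro: rev_finite_subset[of "{..<n}"])

lemma deriv_set_split:
  assumes "a \<notin> A"
  obtains r where "deriv_set A = var_prod {a} * deriv_set (insert a A) + r"
    "vars r \<subseteq> {..<n} - insert a A"
proof
  let ?t = "\<lambda>S. Poly_Mapping.single 0 (Poly_Mapping.lookup f (sqfree_mono S)) * var_prod (S - A)"
  define r where "r = (\<Sum>S\<in>{S\<in>support_sets. A \<subseteq> S \<and> a \<notin> S}. ?t S)"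
  have split: "{S\<in>support_sets. A \<subseteq> S}
      = {S\<in>support_sets. insert a A \<subseteq> S} \<union> {S\<in>support_sets. A \<subseteq> S \<and> a \<notin> S}"
    by auto
  have "deriv_set A = (\<Sum>S\<in>{S\<in>support_sets. insert a A \<subseteq> S}. ?t S) + r"
    unfolding deriv_set_def r_def split using finite_support_sets by (intro sum.union_disjoint) auto
  also have "(\<Sum>S\<in>{S\<in>support_sets. insert a A \<subseteq> S}. ?t S) = var_prod {a} * deriv_set (insert a A)"
    unfolding deriv_set_def sum_distrib_left
  proof (rule sum.cong)
    fix S assume S: "S \<in> {S\<in>support_sets. insert a A \<subseteq> S}"
    then have "S - A = insert a (S - insert a A)"
      using assms by auto
    then have "var_prod (S - A) = (var_prod (insert a (S - insert a A)) :: 'a mpoly)"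
      by (simp only:)
    also have "\<dots> = var_prod {a} * var_prod (S - insert a A)"
      using S support_set_finite by (intro var_prod_insert) auto
    finally show "?t S = var_prod {a} *
        (Poly_Mapping.single 0 (Poly_Mapping.lookup f (sqfree_mono S)) * var_prod (S - insert a A))"
      by (simp only: mult.left_commute)
  qed simp
  finally show "deriv_set A = var_prod {a} * deriv_set (insert a A) + r" .
  show "vars r \<subseteq> {..<n} - insert a A"
    unfolding r_def
    by (rule order.trans[OF vars_sum_const_var_prod])
       (auto simp: support_sets_def intro: rev_finite_subset[of "{..<n}"])
qed

lemma coeff_sum_deriv_set:
  "coeff_sum (deriv_set A) = (\<Sum>S\<in>{S\<in>support_sets. A \<subseteq> S}. Poly_Mapping.lookup f (sqfree_mono S))"
  by (simp add: deriv_set_def coeff_sum_sum const_mult_var_prod)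

lemma sum_coeff_sum_deriv_set:
  "(\<Sum>A\<in>{A. A \<subseteq> {..<n} \<and> card A = k}. coeff_sum (deriv_set A)) = of_nat (d choose k) * coeff_sum f"
proof -
  let ?c = "\<lambda>S. Poly_Mapping.lookup f (sqfree_mono S)"
  have fin: "finite {A. A \<subseteq> {..<n} \<and> card A = k}"
    by (rule finite_subset[of _ "Pow {..<n}"]) auto
  have "(\<Sum>A\<in>{A. A \<subseteq> {..<n} \<and> card A = k}. coeff_sum (deriv_set A))
      = (\<Sum>S\<in>support_sets. \<Sum>A\<in>{A. A \<in> {A. A \<subseteq> {..<n} \<and> card A = k} \<and> A \<subseteq> S}. ?c S)"
    unfolding coeff_sum_deriv_set by (rule sum.swap_restrict[OF fin finite_support_sets])
  also have "\<dots> = (\<Sum>S\<in>support_sets. of_nat (d choose k) * ?c S)"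
  proof (rule sum.cong)
    fix S assume S: "S \<in> support_sets"
    then have "{A. A \<in> {A. A \<subseteq> {..<n} \<and> card A = k} \<and> A \<subseteq> S} = {A. A \<subseteq> S \<and> card A = k}"
      by (auto simp: support_sets_def)
    then show "(\<Sum>A\<in>{A. A \<in> {A. A \<subseteq> {..<n} \<and> card A = k} \<and> A \<subseteq> S}. ?c S) = of_nat (d choose k) * ?c S"
      using n_subsets[OF support_set_finite[OF S], of k] S by (simp add: support_sets_def)
  qed simp
  also have "\<dots> = of_nat (d choose k) * coeff_sum f"
    using coeff_sum_deriv_set[of "{}"] by (simp add: deriv_set_empty sum_distrib_left)
  finally show ?thesis .
qed

lemma exists_coeff_sum_deriv_set_nonzero:
  assumes "CHAR('a) = 0 \<or> CHAR('a) > n" "coeff_sum f \<noteq> 0" "k \<le> d"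
  obtains A where "A \<subseteq> {..<n}" "card A = k" "coeff_sum (deriv_set A) \<noteq> 0"
proof -
  have "f \<noteq> 0"
    using assms(2) by auto
  then have "CHAR('a) = 0 \<or> d < CHAR('a)"
    using assms(1) d_le_n by auto
  from of_nat_choose_neq_zero[OF this assms(3)]
  have "of_nat (d choose k) * coeff_sum f \<noteq> 0"
    using assms(2) by simp
  then show thesis
    using that sum.neutral[of "{A. A \<subseteq> {..<n} \<and> card A = k}" "\<lambda>A. coeff_sum (deriv_set A)"]
    unfolding sum_coeff_sum_deriv_set by blast
qed

end

locale sqfree_form_orbits = sqfree_form +
  fixes N :: nat
  assumes N_ge: "n + d \<le> N"
begin

abbreviation orbit_ideal :: "'a mpoly set" where
  "orbit_ideal \<equiv> ideal_gen N (orbit N f)"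

lemma diff_prod_deriv_set_in_ideal:
  assumes "finite A" "A \<subseteq> {..<n}" "inj_on \<tau> A" "\<tau> ` A \<subseteq> {n..<N}"
  shows "diff_prod A \<tau> * deriv_set A \<in> orbit_ideal"
  using assms
proof (induction A rule: finite_induct)
  case empty
  then show ?case by (simp add: diff_prod_def deriv_set_empty self_in_orbit_ideal)
next
  case (insert a A)
  let ?P = "diff_prod A \<tau> :: 'a mpoly" and ?g = "deriv_set (insert a A)"
  have base: "?P * deriv_set A \<in> orbit_ideal"
    using insert by simp
  obtain r where split: "deriv_set A = var_prod {a} * ?g + r" and r: "vars r \<subseteq> {..<n} - insert a A"
    using deriv_set_split[OF insert.hyps(2)] by blast
  have a: "a < n" "n \<le> \<tau> a" "\<tau> a < N" "\<tau> a \<notin> \<tau> ` A" "\<tau> ` A \<subseteq> {n..}"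
    using insert by auto
  define \<sigma> where "\<sigma> = Transposition.transpose a (\<tau> a)"
  have \<sigma>: "\<sigma> permutes {..<N}"
    unfolding \<sigma>_def using a N_ge by (intro permutes_swap_id) auto
  have "\<sigma> i = i" if "i \<in> {..<n} - {a} \<union> \<tau> ` A" for i
  proof -
    have "i \<noteq> a" "i \<noteq> \<tau> a"
      using that a by auto
    then show ?thesis
      by (simp add: \<sigma>_def)
  qed
  then have fixed: "perm_act \<sigma> p = p" if "vars p \<subseteq> {..<n} - {a} \<union> \<tau> ` A" for p
    using perm_act_id_on_vars[OF that] by blast
  have "perm_act \<sigma> ?P = ?P"
    using vars_diff_prod[of A \<tau>] insert by (intro fixed) auto
  moreover have "perm_act \<sigma> ?g = ?g" "perm_act \<sigma> r = r"
    using vars_deriv_set[of "insert a A"] r by (auto intro: fixed)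
  moreover have "perm_act \<sigma> (var_prod {a}) = (var_prod {\<tau> a} :: 'a mpoly)"
    by (simp add: perm_act_var_prod \<sigma>_def)
  ultimately have "?P * deriv_set A - perm_act \<sigma> (?P * deriv_set A) = diff_prod (insert a A) \<tau> * ?g"
    using insert.hyps by (simp add: split perm_act_mult perm_act_add diff_prod_insert algebra_simps)
  then show ?case
    using ideal_gen_diff[OF base perm_act_orbit_ideal[OF \<sigma> base]] by simp
qed

definition level_in_ideal :: "nat \<Rightarrow> bool" where
  "level_in_ideal k \<longleftrightarrow> (\<forall>A \<tau> C. disjoint_config N A \<tau> C \<and> card A = k \<and> card C = d - k \<longrightarrow>
     config_poly A \<tau> C \<in> orbit_ideal)"

lemma exchange_in_ideal:
  assumes higher: "k < d \<Longrightarrow> level_in_ideal (Suc k)"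
    and cfg: "disjoint_config N A \<tau> U" "disjoint_config N A \<tau> U'"
    and card: "card A = k" "card U = d - k" "card U' = d - k"
  shows "diff_prod A \<tau> * var_prod U - diff_prod A \<tau> * var_prod U' \<in> orbit_ideal"
  using cfg(1) card(2)
proof (induction "card (U - U')" arbitrary: U)
  case 0
  then have "U = U'"
    using disjoint_config_finite cfg(2) card(3) by (metis card_subset_eq Diff_eq_empty_iff card_0_eq finite_Diff)
  then show ?case by (simp add: ideal_gen_zero)
next
  case (Suc j)
  have fin: "finite U" "finite U'" "finite A"
    using Suc.prems cfg(2) disjoint_config_finite by blast+
  obtain u where u: "u \<in> U" "u \<notin> U'"
    using Suc.hyps(2) by (metis Diff_iff card.empty ex_in_conv nat.distinct(1))
  have "\<not> U' \<subseteq> U"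
    using card_subset_eq[OF fin(1)] Suc.prems(2) card(3) u by metis
  then obtain u' where u': "u' \<in> U'" "u' \<notin> U"
    by blast
  have u'_fresh: "u' < N" "u' \<notin> U \<union> A \<union> \<tau> ` A"
    using cfg(2) u' by (auto simp: disjoint_config_def)
  have "k < d"
    using u fin(1) Suc.prems(2) card_gt_0_iff[of U] by auto
  define U1 where "U1 = insert u' (U - {u})"
  have "U1 - U' = (U - U') - {u}"
    using u' by (auto simp: U1_def)
  then have "j = card (U1 - U')"
    using Suc.hyps(2) u fin by simp
  moreover have "disjoint_config N A \<tau> U1"
    using Suc.prems(1) u'_fresh by (auto simp: disjoint_config_def U1_def)
  moreover have "card U1 = d - k"
    using Suc.prems(2) fin u u' \<open>k < d\<close> by (simp add: U1_def)
  ultimately have IH: "diff_prod A \<tau> * var_prod U1 - diff_prod A \<tau> * var_prod U' \<in> orbit_ideal"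
    using Suc.hyps(1) by blast
  have "u \<notin> A"
    using Suc.prems(1) u(1) by (auto simp: disjoint_config_def)
  then have "card (insert u A) = Suc k" "card (U - {u}) = d - Suc k"
    using Suc.prems(2) fin u(1) card(1) by simp_all
  then have "config_poly (insert u A) (\<tau>(u := u')) (U - {u}) \<in> orbit_ideal"
    using higher[OF \<open>k < d\<close>] disjoint_config_exchange[OF Suc.prems(1) u(1) u'_fresh]
    by (simp add: level_in_ideal_def)
  then have "diff_prod A \<tau> * var_prod U - diff_prod A \<tau> * var_prod U1 \<in> orbit_ideal"
    unfolding U1_def config_poly_exchange[OF Suc.prems(1) u(1) u'_fresh(2)] .
  from ideal_gen_add[OF this IH] show ?case by simp
qed

lemma config_poly_in_ideal:
  assumes higher: "k < d \<Longrightarrow> level_in_ideal (Suc k)"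
    and A: "A \<subseteq> {..<n}" "card A = k" "coeff_sum (deriv_set A) \<noteq> 0"
    and \<tau>: "inj_on \<tau> A" "\<tau> ` A \<subseteq> {n..<N}"
    and C: "C \<subseteq> {..<n} - A" "card C = d - k"
  shows "config_poly A \<tau> C \<in> orbit_ideal"
proof -
  let ?c = "\<lambda>S. Poly_Mapping.lookup f (sqfree_mono S)" and ?P = "diff_prod A \<tau> :: 'a mpoly"
  have cfg: "disjoint_config N A \<tau> U" if "U \<subseteq> {..<n} - A" for U
    using that A(1) \<tau> N_ge by (fastforce simp: disjoint_config_def)
  have "?P * var_prod (S - A) - ?P * var_prod C \<in> orbit_ideal" if "S \<in> {S\<in>support_sets. A \<subseteq> S}" for S
    using that A(2) C support_set_finite[of S]
    by (intro exchange_in_ideal[OF higher cfg cfg(1)[OF C(1)]])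
       (auto simp: support_sets_def card_Diff_subset finite_subset)
  then have "(\<Sum>S\<in>{S\<in>support_sets. A \<subseteq> S}.
      Poly_Mapping.single 0 (?c S) * (?P * var_prod (S - A) - ?P * var_prod C)) \<in> orbit_ideal"
    by (intro ideal_gen_sum ideal_gen_mult) (simp_all add: in_vars_iff_vars)
  moreover have "(\<Sum>S\<in>{S\<in>support_sets. A \<subseteq> S}. Poly_Mapping.single 0 (?c S) * (?P * var_prod (S - A)))
      = ?P * deriv_set A"
    by (simp add: deriv_set_def sum_distrib_left mult.left_commute)
  moreover have "(\<Sum>S\<in>{S\<in>support_sets. A \<subseteq> S}. Poly_Mapping.single 0 (?c S) * (?P * var_prod C))
      = Poly_Mapping.single 0 (coeff_sum (deriv_set A)) * config_poly A \<tau> C"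
    by (simp add: coeff_sum_deriv_set config_poly_def single_sum sum_distrib_right)
  ultimately have "?P * deriv_set A - Poly_Mapping.single 0 (coeff_sum (deriv_set A)) * config_poly A \<tau> C
      \<in> orbit_ideal"
    by (simp add: right_diff_distrib sum_subtractf)
  from ideal_gen_diff[OF diff_prod_deriv_set_in_ideal[OF finite_subset[OF A(1) finite_lessThan] A(1) \<tau>] this]
  have "Poly_Mapping.single 0 (coeff_sum (deriv_set A)) * config_poly A \<tau> C \<in> orbit_ideal"
    by (simp only: diff_diff_eq2 add_diff_cancel_left')
  then show ?thesis
    using A(3) by (rule ideal_gen_const_mult_cancel)
qed

lemma level_in_ideal_step:
  assumes char: "CHAR('a) = 0 \<or> CHAR('a) > n" and nonzero: "coeff_sum f \<noteq> 0"
    and "k \<le> d" and higher: "k < d \<Longrightarrow> level_in_ideal (Suc k)"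
  shows "level_in_ideal k"
proof -
  obtain A0 where A0: "A0 \<subseteq> {..<n}" "card A0 = k" "coeff_sum (deriv_set A0) \<noteq> 0"
    using exists_coeff_sum_deriv_set_nonzero[OF char nonzero \<open>k \<le> d\<close>] .
  obtain \<tau>0 where \<tau>0: "bij_betw \<tau>0 A0 {n..<n + k}"
    using finite_same_card_bij[of A0 "{n..<n + k}"] finite_subset[OF A0(1)] A0(2) by auto
  have "d \<le> n"
    using nonzero by (intro d_le_n) auto
  then have "d - k \<le> card ({..<n} - A0)"
    using A0 finite_subset[OF A0(1)] by (simp add: card_Diff_subset)
  then obtain C0 where C0: "C0 \<subseteq> {..<n} - A0" "card C0 = d - k"
    using obtain_subset_with_card_n by metis
  have \<tau>0': "inj_on \<tau>0 A0" "\<tau>0 ` A0 \<subseteq> {n..<N}"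
    using \<tau>0 \<open>k \<le> d\<close> N_ge by (auto simp: bij_betw_def)
  have in_ideal: "config_poly A0 \<tau>0 C0 \<in> orbit_ideal"
    by (rule config_poly_in_ideal[OF higher A0 \<tau>0' C0])
  have cfg: "disjoint_config N A0 \<tau>0 C0"
    using A0(1) \<tau>0' C0(1) N_ge by (fastforce simp: disjoint_config_def)
  show ?thesis
    unfolding level_in_ideal_def
  proof (intro allI impI)
    fix A \<tau> C assume "disjoint_config N A \<tau> C \<and> card A = k \<and> card C = d - k"
    then show "config_poly A \<tau> C \<in> orbit_ideal"
      by (intro config_poly_orbit_ideal_transfer[OF in_ideal cfg]) (simp_all add: A0(2) C0(2))
  qed
qed

lemma var_prod_in_orbit_ideal:
  assumes char: "CHAR('a) = 0 \<or> CHAR('a) > n" and nonzero: "coeff_sum f \<noteq> 0"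
    and C: "C \<subseteq> {..<N}" "card C = d"
  shows "var_prod C \<in> orbit_ideal"
proof -
  have "level_in_ideal 0"
  proof (rule inc_induct[of 0 d])
    show "level_in_ideal d"
      by (rule level_in_ideal_step[OF char nonzero]) simp_all
  next
    fix k assume "k < d" "level_in_ideal (Suc k)"
    then show "level_in_ideal k"
      using level_in_ideal_step[OF char nonzero less_imp_le[OF \<open>k < d\<close>]] by blast
  qed simp
  moreover have "disjoint_config N {} id C"
    using C by (simp add: disjoint_config_def)
  ultimately have "config_poly {} id C \<in> orbit_ideal"
    using C(2) unfolding level_in_ideal_def by auto
  then show ?thesis
    by (simp add: config_poly_def diff_prod_def)
qed

lemma orbit_ideal_eq:
  assumes char: "CHAR('a) = 0 \<or> CHAR('a) > n" and nonzero: "coeff_sum f \<noteq> 0"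
  shows "orbit_ideal = ideal_gen N (orbit N (prod_first_vars d))"
proof
  have "d \<le> n"
    using nonzero by (intro d_le_n) auto
  then have orbit: "orbit N (prod_first_vars d) = {var_prod C | C. C \<subseteq> {..<N} \<and> card C = d}"
    using N_ge by (intro orbit_prod_first_vars) simp
  have generator: "var_prod S \<in> orbit N (prod_first_vars d)" if "S \<in> support_sets" for S
  proof -
    have "S \<subseteq> {..<N}" "card S = d"
      using that N_ge by (auto simp: support_sets_def)
    then show ?thesis
      unfolding orbit by blast
  qed
  have "f = (\<Sum>S\<in>support_sets. Poly_Mapping.single 0 (Poly_Mapping.lookup f (sqfree_mono S)) * var_prod S)"
    using deriv_set_empty by (simp add: deriv_set_def)
  also have "\<dots> \<in> ideal_gen N (orbit N (prod_first_vars d))"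
    by (intro ideal_gen_sum ideal_gen_mult ideal_gen_generator generator) (simp_all add: in_vars_iff_vars)
  finally have f_in: "f \<in> ideal_gen N (orbit N (prod_first_vars d))" .
  show "orbit_ideal \<subseteq> ideal_gen N (orbit N (prod_first_vars d))"
  proof (rule ideal_gen_minimal, rule subsetI)
    fix q assume "q \<in> orbit N f"
    then obtain \<sigma> where "\<sigma> permutes {..<N}" "q = perm_act \<sigma> f"
      unfolding orbit_def by blast
    then show "q \<in> ideal_gen N (orbit N (prod_first_vars d))"
      using perm_act_orbit_ideal[OF _ f_in] by simp
  qed
  show "ideal_gen N (orbit N (prod_first_vars d)) \<subseteq> orbit_ideal"
    unfolding orbit
    by (rule ideal_gen_minimal) (auto intro: var_prod_in_orbit_ideal[OF char nonzero])
qed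

end

theorem theorem1p7:
  fixes f :: "'a::field mpoly" and n d :: nat
  assumes char: "CHAR('a) = 0 \<or> CHAR('a) > n"
    and f_vars: "in_vars n f"
    and homog: "\<forall>\<alpha>\<in>Poly_Mapping.keys f. (\<Sum>i\<in>Poly_Mapping.keys \<alpha>. Poly_Mapping.lookup \<alpha> i) = d"
    and sqfree: "\<forall>\<alpha>\<in>Poly_Mapping.keys f. \<forall>i. Poly_Mapping.lookup \<alpha> i \<le> 1"
  shows "(eval_mpoly f (\<lambda>_. 1) \<noteq> 0 \<longrightarrow>
            (\<forall>N \<ge> n + d. ideal_gen N (orbit N f) = ideal_gen N (orbit N (prod_first_vars d))))
       \<and> (eval_mpoly f (\<lambda>_. 1) = 0 \<longrightarrow>
            (\<forall>N \<ge> n. \<forall>\<alpha> k. Poly_Mapping.keys \<alpha> \<subseteq> {..<N} \<longrightarrow>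
                 monom1 \<alpha> ^ k \<notin> ideal_gen N (orbit N f)))"
proof (intro conjI impI allI)
  fix N assume "eval_mpoly f (\<lambda>_. 1) \<noteq> 0" "n + d \<le> N"
  then interpret sqfree_form_orbits f n d N
    using f_vars homog sqfree by unfold_locales
  show "ideal_gen N (orbit N f) = ideal_gen N (orbit N (prod_first_vars d))"
    using orbit_ideal_eq[OF char] \<open>eval_mpoly f (\<lambda>_. 1) \<noteq> 0\<close> by (simp add: eval_mpoly_one)
next
  fix N \<alpha> k assume "eval_mpoly f (\<lambda>_. 1) = 0"
  then show "monom1 \<alpha> ^ k \<notin> ideal_gen N (orbit N f)"
    by (simp add: eval_mpoly_one monom1_power_notin_orbit_ideal)
qed

end
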